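(* Let $(G_n)$ be a sequence of graphs with $\min_{u\in V}\delta_u=\omega(\log n)$, fix $p\in[0,1]$, and for each $n$ run the $(p,\mathcal B)$-Deterministic-Majority dynamics on $G_n$ from the configuration in which every node is $\mathcal R$. (Fast disruption) If $p>1/2$, then $\Pr(\mathrm{vol}(B^{(1)})=\mathrm{vol}(V))=1-o(1)$, and consequently $\Pr(\tau=1)=1-o(1)$. (Slow disruption) If $p<1/2$, then for every $K>0$, $\Pr(\forall t\le n^K:\ \mathrm{vol}(R^{(t)})=\mathrm{vol}(V))=1-o(1)$, and consequently $\Pr(\tau>n^K)=1-o(1)$.
   Context: $G_n=(V,E)$, $V=\{1,\dots,n\}$, $N(u)$ neighbourhood, $\delta_u=|N(u)|$, $\mathrm{vol}(S)=\sum_{v\in S}\delta_v$; asymptotics as $n\to\infty$. States in $\{\mathcal R,\mathcal B\}$; $R^{(t)},B^{(t)}$ are the sets of nodes in each state at round $t$, and $\tau=\inf\{t\ge0:\mathrm{vol}(B^{(t)})/\mathrm{vol}(V)>1/2\}$. $(p,\mathcal B)$-Deterministic-Majority: in each round $t\ge1$, every node $u$, for each of its neighbours $v$ independently, sees $v$ as $\mathcal B$ with probability $p$ and otherwise sees $v$'s true state at round $t-1$; $u$ adopts the state seen by the majority of its whole neighbourhood (ties broken by some fixed rule, e.g. uniformly at random). *)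

theory Defs
  imports "HOL-Probability.Probability" "HOL-Library.Landau_Symbols"
begin

text \<open>A sequence of graphs: G_n has vertex set V n = {1..n} and adjacency E n.
  A configuration is a map from nodes to bool, True meaning state B, False meaning state R.\<close>

definition V :: "nat \<Rightarrow> nat set" where
  "V n = {1..n}"

definition nbhd :: "(nat \<Rightarrow> nat \<Rightarrow> nat \<Rightarrow> bool) \<Rightarrow> nat \<Rightarrow> nat \<Rightarrow> nat set" where
  "nbhd E n u = {v \<in> V n. E n u v}"

definition deg :: "(nat \<Rightarrow> nat \<Rightarrow> nat \<Rightarrow> bool) \<Rightarrow> nat \<Rightarrow> nat \<Rightarrow> nat" where
  "deg E n u = card (nbhd E n u)"

definition vol :: "(nat \<Rightarrow> nat \<Rightarrow> nat \<Rightarrow> bool) \<Rightarrow> nat \<Rightarrow> nat set \<Rightarrow> nat" where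
  "vol E n S = (\<Sum>v\<in>S. deg E n v)"

definition min_deg :: "(nat \<Rightarrow> nat \<Rightarrow> nat \<Rightarrow> bool) \<Rightarrow> nat \<Rightarrow> nat" where
  "min_deg E n = Min (deg E n ` V n)"

definition Bset :: "nat \<Rightarrow> (nat \<Rightarrow> bool) \<Rightarrow> nat set" where
  "Bset n c = {u \<in> V n. c u}"

definition Rset :: "nat \<Rightarrow> (nat \<Rightarrow> bool) \<Rightarrow> nat set" where
  "Rset n c = {u \<in> V n. \<not> c u}"

definition node_update ::
  "(nat \<Rightarrow> nat \<Rightarrow> nat \<Rightarrow> bool) \<Rightarrow> real \<Rightarrow> (nat \<Rightarrow> nat \<Rightarrow> (nat \<Rightarrow> bool) \<Rightarrow> bool pmf)
     \<Rightarrow> nat \<Rightarrow> (nat \<Rightarrow> bool) \<Rightarrow> nat \<Rightarrow> bool pmf" where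
  "node_update E p tie n c u =
     Pi_pmf (nbhd E n u) False (\<lambda>_. bernoulli_pmf p) \<bind> (\<lambda>coin.
       let seenB = card {v \<in> nbhd E n u. coin v \<or> c v};
           seenR = card {v \<in> nbhd E n u. \<not> (coin v \<or> c v)}
       in if seenB > seenR then return_pmf True
          else if seenR > seenB then return_pmf False
          else tie n u c)"

definition step ::
  "(nat \<Rightarrow> nat \<Rightarrow> nat \<Rightarrow> bool) \<Rightarrow> real \<Rightarrow> (nat \<Rightarrow> nat \<Rightarrow> (nat \<Rightarrow> bool) \<Rightarrow> bool pmf)
     \<Rightarrow> nat \<Rightarrow> (nat \<Rightarrow> bool) \<Rightarrow> (nat \<Rightarrow> bool) pmf" where
  "step E p tie n c = Pi_pmf (V n) False (node_update E p tie n c)"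

text \<open>Distribution of the trajectory (configurations at rounds 0..T) starting from all-R;
  beyond the horizon T the configuration is frozen at its round-T value (so events about
  rounds \<le> T, and the events tau = 1 (T \<ge> 1) and tau > T, are described correctly).\<close>

primrec traj ::
  "(nat \<Rightarrow> nat \<Rightarrow> nat \<Rightarrow> bool) \<Rightarrow> real \<Rightarrow> (nat \<Rightarrow> nat \<Rightarrow> (nat \<Rightarrow> bool) \<Rightarrow> bool pmf)
     \<Rightarrow> nat \<Rightarrow> nat \<Rightarrow> (nat \<Rightarrow> nat \<Rightarrow> bool) pmf" where
  "traj E p tie n 0 = return_pmf (\<lambda>t u. False)"
| "traj E p tie n (Suc T) =
     traj E p tie n T \<bind> (\<lambda>x. step E p tie n (x T) \<bind>
       (\<lambda>c. return_pmf (\<lambda>t. if t \<le> T then x t else c)))"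

definition B_majority :: "(nat \<Rightarrow> nat \<Rightarrow> nat \<Rightarrow> bool) \<Rightarrow> nat \<Rightarrow> (nat \<Rightarrow> bool) \<Rightarrow> bool" where
  "B_majority E n c \<longleftrightarrow> real (vol E n (Bset n c)) / real (vol E n (V n)) > 1/2"

definition tau :: "(nat \<Rightarrow> nat \<Rightarrow> nat \<Rightarrow> bool) \<Rightarrow> nat \<Rightarrow> (nat \<Rightarrow> nat \<Rightarrow> bool) \<Rightarrow> enat" where
  "tau E n x = (if \<exists>t. B_majority E n (x t) then enat (LEAST t. B_majority E n (x t)) else \<infinity>)"

end

theory Submission
  imports Defs
begin

text \<open>While all neighbours of a node are \<R>, the node sees as \<B> exactly the neighbours whose coin
  shows heads, so its next state is the majority of \<delta>_u independent p-coins. By Hoeffding's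
  inequality this majority goes against the bias of the coins with probability at most
  2 exp(-2 \<delta>_u (p - 1/2)^2). A union bound over the n nodes bounds the probability that one round
  started from the all-\<R> configuration produces such a node by 2 n exp(-2 min\<delta> (p - 1/2)^2), which
  is n^(-\<omega>(1)) since min\<delta> = \<omega>(log n). For p > 1/2 one round therefore turns every node \<B>; for
  p < 1/2 every round reproduces the all-\<R> configuration, and a union bound over n^K rounds still
  fails only with probability o(1).\<close>

lemma prob_bind_pmf_le:
  fixes M :: "'a pmf" and f :: "'a \<Rightarrow> 'b pmf"
  assumes "\<And>x. x \<in> A \<Longrightarrow> measure_pmf.prob (f x) B \<le> e" and "0 \<le> e"
  shows "measure_pmf.prob (M \<bind> f) B \<le> measure_pmf.prob M (- A) + e"
proof -
  have "emeasure (measure_pmf (bind_pmf M f)) B = (\<integral>\<^sup>+x. emeasure (f x) B \<partial>M)"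
    by simp
  also have "\<dots> \<le> (\<integral>\<^sup>+x. (indicator (- A) x + ennreal e) \<partial>M)"
  proof (rule nn_integral_mono)
    fix x
    show "emeasure (f x) B \<le> indicator (- A) x + ennreal e"
    proof (cases "x \<in> A")
      case True
      then show ?thesis
        using assms(1) by (simp add: measure_pmf.emeasure_eq_measure ennreal_leI)
    next
      case False
      then show ?thesis
        using measure_pmf.emeasure_le_1[of "f x" B] by (simp add: order_trans[OF _ add_increasing2])
    qed
  qed
  also have "\<dots> = ennreal (measure_pmf.prob M (- A) + e)"
    using assms(2)
    by (subst nn_integral_add) (auto simp: measure_pmf.emeasure_eq_measure ennreal_plus)
  finally have "ennreal (measure_pmf.prob (M \<bind> f) B) \<le> ennreal (measure_pmf.prob M (- A) + e)"
    by (simp only: measure_pmf.emeasure_eq_measure)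
  then show ?thesis
    using assms(2) by (subst (asm) ennreal_le_iff) (auto intro: add_nonneg_nonneg)
qed

lemma card_filter_add_card_filter_not:
  "finite A \<Longrightarrow> card {x \<in> A. P x} + card {x \<in> A. \<not> P x} = card A"
  by (subst card_Un_disjoint[symmetric]) (auto intro: arg_cong[where f = card])

lemma prob_coins_deviation_ge:
  assumes "finite N" and "0 \<le> p" "p \<le> 1" and "0 \<le> \<epsilon>"
  shows "measure_pmf.prob (Pi_pmf N dflt (\<lambda>_. bernoulli_pmf p))
           {f. \<epsilon> \<le> \<bar>real (card {x \<in> N. f x}) / real (card N) - p\<bar>}
         \<le> 2 * exp (-2 * real (card N) * \<epsilon>\<^sup>2)"
proof (cases "card N = 0")
  case True
  then show ?thesis
    using measure_pmf.prob_le_1 by (simp add: order_trans[OF _ one_le_numeral])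
next
  case False
  have "measure_pmf.prob (Pi_pmf N dflt (\<lambda>_. bernoulli_pmf p))
           {f. \<epsilon> \<le> \<bar>real (card {x \<in> N. f x}) / real (card N) - p\<bar>}
      = measure_pmf.prob (map_pmf (\<lambda>f. card {x \<in> N. f x}) (Pi_pmf N dflt (\<lambda>_. bernoulli_pmf p)))
           {k. \<epsilon> \<le> \<bar>real k / real (card N) - p\<bar>}"
    by simp
  also have "map_pmf (\<lambda>f. card {x \<in> N. f x}) (Pi_pmf N dflt (\<lambda>_. bernoulli_pmf p))
      = binomial_pmf (card N) p"
    by (rule binomial_pmf_altdef'[symmetric]) (use assms in auto)
  also have "measure_pmf.prob (binomial_pmf (card N) p) {k. \<epsilon> \<le> \<bar>real k / real (card N) - p\<bar>}
      \<le> 2 * exp (-2 * real (card N) * \<epsilon>\<^sup>2)"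
    using binomial_distribution.prob_abs_ge'[of p "card N" \<epsilon>] False assms
    by (simp add: binomial_distribution_def)
  finally show ?thesis .
qed

lemma finite_nbhd: "finite (nbhd E n u)"
  by (simp add: nbhd_def V_def)

lemma node_update_if_nbhd_R:
  assumes "\<forall>v \<in> nbhd E n u. \<not> c v"
  shows "node_update E p tie n c u =
    Pi_pmf (nbhd E n u) False (\<lambda>_. bernoulli_pmf p) \<bind> (\<lambda>coin.
      if card (nbhd E n u) < 2 * card {v \<in> nbhd E n u. coin v} then return_pmf True
      else if 2 * card {v \<in> nbhd E n u. coin v} < card (nbhd E n u) then return_pmf False
      else tie n u c)"
  unfolding node_update_def
proof (intro bind_pmf_cong refl)
  fix coin :: "nat \<Rightarrow> bool"
  let ?N = "nbhd E n u"
  have "{v \<in> ?N. coin v \<or> c v} = {v \<in> ?N. coin v}" "{v \<in> ?N. \<not> (coin v \<or> c v)} = {v \<in> ?N. \<not> coin v}"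
    using assms by auto
  moreover have "card {v \<in> ?N. coin v} + card {v \<in> ?N. \<not> coin v} = card ?N"
    by (rule card_filter_add_card_filter_not[OF finite_nbhd])
  ultimately show "(let seenB = card {v \<in> ?N. coin v \<or> c v}; seenR = card {v \<in> ?N. \<not> (coin v \<or> c v)}
      in if seenR < seenB then return_pmf True else if seenB < seenR then return_pmf False else tie n u c)
    = (if card ?N < 2 * card {v \<in> ?N. coin v} then return_pmf True
       else if 2 * card {v \<in> ?N. coin v} < card ?N then return_pmf False else tie n u c)"
    by (simp add: Let_def)
qed

text \<open>The event \<open>{p < 1/2}\<close> is the state against the bias of the coins (\<open>True\<close> meaning \<B>).\<close>

lemma node_update_rare_state_prob_le:
  assumes R: "\<forall>v \<in> nbhd E n u. \<not> c v" and p: "0 \<le> p" "p \<le> 1"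
  shows "measure_pmf.prob (node_update E p tie n c u) {p < 1/2}
           \<le> 2 * exp (-2 * real (deg E n u) * (p - 1/2)\<^sup>2)"
proof (cases "deg E n u = 0")
  case True
  then show ?thesis
    using measure_pmf.prob_le_1 by (simp add: order_trans[OF _ one_le_numeral])
next
  case False
  let ?N = "nbhd E n u"
  let ?coins = "Pi_pmf ?N False (\<lambda>_. bernoulli_pmf p)"
  let ?heads = "\<lambda>coin. card {v \<in> ?N. coin v}"
  let ?A = "{coin. \<bar>real (?heads coin) / real (card ?N) - p\<bar> < \<bar>p - 1/2\<bar>}"
  have d: "0 < card ?N"
    using False by (simp add: deg_def)
  have "measure_pmf.prob (node_update E p tie n c u) {p < 1/2} \<le> measure_pmf.prob ?coins (- ?A) + 0"
    unfolding node_update_if_nbhd_R[OF R]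
  proof (rule prob_bind_pmf_le)
    fix coin
    assume "coin \<in> ?A"
    define x where "x = real (?heads coin) / real (card ?N)"
    have "\<bar>x - p\<bar> < \<bar>p - 1/2\<bar>"
      using \<open>coin \<in> ?A\<close> by (simp add: x_def)
    then have "p \<noteq> 1/2" "p < 1/2 \<Longrightarrow> x < 1/2" "1/2 < p \<Longrightarrow> 1/2 < x"
      by linarith+
    moreover have "x < 1/2 \<longleftrightarrow> 2 * ?heads coin < card ?N" "1/2 < x \<longleftrightarrow> card ?N < 2 * ?heads coin"
      using d by (simp_all add: x_def field_simps) linarith+
    ultimately show "measure_pmf.prob (if card ?N < 2 * ?heads coin then return_pmf True
        else if 2 * ?heads coin < card ?N then return_pmf False else tie n u c) {p < 1/2} \<le> 0"
      by (cases "p < 1/2") auto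
  qed simp
  also have "- ?A = {coin. \<bar>p - 1/2\<bar> \<le> \<bar>real (?heads coin) / real (card ?N) - p\<bar>}"
    by auto
  also have "measure_pmf.prob ?coins \<dots> + 0 \<le> 2 * exp (-2 * real (deg E n u) * (p - 1/2)\<^sup>2)"
    using prob_coins_deviation_ge[OF finite_nbhd p, of "\<bar>p - 1/2\<bar>"] by (simp add: deg_def)
  finally show ?thesis .
qed

lemma min_deg_le_deg: "u \<in> V n \<Longrightarrow> min_deg E n \<le> deg E n u"
  unfolding min_deg_def by (rule Min_le) (auto simp: V_def)

lemma step_marginal:
  assumes "u \<in> V n"
  shows "map_pmf (\<lambda>c'. c' u) (step E p tie n c) = node_update E p tie n c u"
  unfolding step_def using assms by (subst Pi_pmf_component) (auto simp: V_def)

lemma step_some_node_prob_le: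
  "measure_pmf.prob (step E p tie n c) {c'. \<exists>u \<in> V n. c' u = b}
     \<le> (\<Sum>u \<in> V n. measure_pmf.prob (node_update E p tie n c u) {b})"
proof -
  have "{c'. \<exists>u \<in> V n. c' u = b} = (\<Union>u \<in> V n. {c'. c' u = b})"
    by auto
  then have "measure_pmf.prob (step E p tie n c) {c'. \<exists>u \<in> V n. c' u = b}
      \<le> (\<Sum>u \<in> V n. measure_pmf.prob (step E p tie n c) {c'. c' u = b})"
    using measure_pmf.finite_measure_subadditive_finite[of "V n" "\<lambda>u. {c'. c' u = b}"]
    by (simp add: V_def)
  also have "\<dots> = (\<Sum>u \<in> V n. measure_pmf.prob (node_update E p tie n c u) {b})"
    by (rule sum.cong) (simp_all flip: step_marginal add: vimage_def)
  finally show ?thesis .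
qed

lemma step_from_all_R_rare_state_prob_le:
  assumes R: "\<forall>v \<in> V n. \<not> c v" and p: "0 \<le> p" "p \<le> 1"
  shows "measure_pmf.prob (step E p tie n c) {c'. \<exists>u \<in> V n. c' u = (p < 1/2)}
           \<le> 2 * real n * exp (-2 * real (min_deg E n) * (p - 1/2)\<^sup>2)"
proof -
  have "measure_pmf.prob (step E p tie n c) {c'. \<exists>u \<in> V n. c' u = (p < 1/2)}
      \<le> (\<Sum>u \<in> V n. measure_pmf.prob (node_update E p tie n c u) {p < 1/2})"
    by (rule step_some_node_prob_le)
  also have "\<dots> \<le> (\<Sum>u \<in> V n. 2 * exp (-2 * real (min_deg E n) * (p - 1/2)\<^sup>2))"
  proof (rule sum_mono)
    fix u
    assume u: "u \<in> V n"
    have "measure_pmf.prob (node_update E p tie n c u) {p < 1/2}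
        \<le> 2 * exp (-2 * real (deg E n u) * (p - 1/2)\<^sup>2)"
      using R p by (intro node_update_rare_state_prob_le) (auto simp: nbhd_def)
    also have "\<dots> \<le> 2 * exp (-2 * real (min_deg E n) * (p - 1/2)\<^sup>2)"
      using min_deg_le_deg[OF u, of E] by (simp add: mult_right_mono)
    finally show "measure_pmf.prob (node_update E p tie n c u) {p < 1/2}
        \<le> 2 * exp (-2 * real (min_deg E n) * (p - 1/2)\<^sup>2)" .
  qed
  also have "\<dots> = 2 * real n * exp (-2 * real (min_deg E n) * (p - 1/2)\<^sup>2)"
    by (simp add: V_def)
  finally show ?thesis .
qed

lemma traj_1:
  "traj E p tie n 1 = map_pmf (\<lambda>c t. if t = 0 then (\<lambda>_. False) else c) (step E p tie n (\<lambda>_. False))"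
  by (simp add: map_pmf_def bind_return_pmf)

lemma traj_leaves_all_R_prob_le:
  assumes step: "\<And>c. \<forall>u \<in> V n. \<not> c u \<Longrightarrow>
                   measure_pmf.prob (step E p tie n c) {c'. \<exists>u \<in> V n. c' u} \<le> e"
  shows "measure_pmf.prob (traj E p tie n T) {x. \<exists>t. \<exists>u \<in> V n. x t u} \<le> real T * e"
proof (induction T)
  case 0
  then show ?case
    by simp
next
  case (Suc T)
  let ?all_R = "{c. \<forall>u \<in> V n. \<not> c u}"
  have e: "0 \<le> e"
    using step[of "\<lambda>_. False"] measure_nonneg order_trans by blast
  have "measure_pmf.prob (traj E p tie n (Suc T)) {x. \<exists>t. \<exists>u \<in> V n. x t u}
      \<le> measure_pmf.prob (traj E p tie n T) (- {x. \<forall>t. x t \<in> ?all_R}) + e"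
    unfolding traj.simps
  proof (rule prob_bind_pmf_le[OF _ e])
    fix x :: "nat \<Rightarrow> nat \<Rightarrow> bool"
    assume x: "x \<in> {x. \<forall>t. x t \<in> ?all_R}"
    have "measure_pmf.prob (step E p tie n (x T) \<bind> (\<lambda>c. return_pmf (\<lambda>t. if t \<le> T then x t else c)))
            {x. \<exists>t. \<exists>u \<in> V n. x t u}
        \<le> measure_pmf.prob (step E p tie n (x T)) (- ?all_R) + 0"
      by (rule prob_bind_pmf_le) (use x in auto)
    also have "\<dots> \<le> e"
      using x step[of "x T"] by (simp add: Compl_eq)
    finally show "measure_pmf.prob (step E p tie n (x T) \<bind> (\<lambda>c. return_pmf (\<lambda>t. if t \<le> T then x t else c)))
            {x. \<exists>t. \<exists>u \<in> V n. x t u} \<le> e" .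
  qed
  also have "- {x. \<forall>t. x t \<in> ?all_R} = {x. \<exists>t. \<exists>u \<in> V n. x t u}"
    by auto
  finally show ?case
    using Suc by (simp add: algebra_simps)
qed

lemma not_B_majority_if_all_R:
  assumes "\<forall>u \<in> V n. \<not> c u"
  shows "\<not> B_majority E n c"
proof -
  have "Bset n c = {}"
    using assms by (auto simp: Bset_def)
  then show ?thesis
    by (simp add: B_majority_def vol_def)
qed

lemma B_majority_if_all_B:
  assumes "0 < vol E n (V n)" and "\<forall>u \<in> V n. c u"
  shows "B_majority E n c"
proof -
  have "Bset n c = V n"
    using assms(2) by (auto simp: Bset_def)
  then show ?thesis
    using assms(1) by (simp add: B_majority_def)
qed

lemma tau_eq_1:
  assumes "\<not> B_majority E n (x 0)" and "B_majority E n (x 1)"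
  shows "tau E n x = 1"
proof -
  have "(LEAST t. B_majority E n (x t)) = 1"
    by (rule Least_equality) (use assms in \<open>auto intro: Suc_leI gr0I\<close>)
  then show ?thesis
    using assms(2) by (auto simp: tau_def one_enat_def)
qed

lemma vol_V_pos: "0 < n \<Longrightarrow> 0 < min_deg E n \<Longrightarrow> 0 < vol E n (V n)"
  unfolding vol_def
  by (rule ccontr) (use min_deg_le_deg[of 1 n E] in \<open>auto simp: V_def\<close>)

lemma powr_mult_exp_tendsto_0:
  fixes d :: "nat \<Rightarrow> nat"
  assumes d: "(\<lambda>n. real (d n)) \<in> \<omega>(\<lambda>n. ln (real n))" and c: "0 < c"
  shows "(\<lambda>n. real n powr K * exp (- c * real (d n))) \<longlonglongrightarrow> 0"
proof (rule tendsto_sandwich[of "\<lambda>_. 0" _ _ "\<lambda>n. inverse (real n)"])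
  have "\<forall>\<^sub>F n in sequentially. ((\<bar>K\<bar> + 1) / c) * norm (ln (real n)) \<le> norm (real (d n))"
    by (rule smallomegaD[OF d])
  then show "\<forall>\<^sub>F n in sequentially. real n powr K * exp (- c * real (d n)) \<le> inverse (real n)"
    using eventually_gt_at_top[of "0::nat"]
  proof eventually_elim
    case (elim n)
    have ln: "0 \<le> ln (real n)"
      using elim by simp
    have "(\<bar>K\<bar> + 1) * ln (real n) \<le> c * real (d n)"
      using elim ln c by (simp add: field_simps)
    moreover have "K * ln (real n) \<le> \<bar>K\<bar> * ln (real n)"
      using ln by (simp add: mult_right_mono)
    ultimately have "K * ln (real n) - c * real (d n) \<le> - ln (real n)"
      by (simp add: algebra_simps)
    then have "exp (K * ln (real n) - c * real (d n)) \<le> exp (- ln (real n))"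
      by simp
    then show ?case
      using elim by (simp add: powr_def exp_diff exp_minus divide_inverse)
  qed
qed (auto intro: tendsto_inverse_0_at_top filterlim_real_sequentially)

lemma prob_tendsto_1_if_superset:
  fixes M :: "nat \<Rightarrow> 'a pmf"
  assumes "b \<longlonglongrightarrow> 0" and "\<And>n. 1 - b n \<le> measure_pmf.prob (M n) (A n)"
    and "\<forall>\<^sub>F n in sequentially. A n \<subseteq> B n"
  shows "(\<lambda>n. measure_pmf.prob (M n) (B n)) \<longlonglongrightarrow> 1"
proof (rule tendsto_sandwich[of "\<lambda>n. 1 - b n" _ sequentially "\<lambda>_. 1"])
  show "\<forall>\<^sub>F n in sequentially. 1 - b n \<le> measure_pmf.prob (M n) (B n)"
    using assms(3)
  proof eventually_elim
    case (elim n)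
    then show ?case
      using assms(2)[of n] measure_pmf.finite_measure_mono[of "A n" "B n" "M n"] by simp
  qed
  show "(\<lambda>n. 1 - b n) \<longlonglongrightarrow> 1"
    using tendsto_diff[OF tendsto_const assms(1), of 1] by simp
qed auto

lemma fast_disruption:
  assumes mindeg: "(\<lambda>n. real (min_deg E n)) \<in> \<omega>(\<lambda>n. ln (real n))" and p: "1/2 < p" "p \<le> 1"
  shows "(\<lambda>n. measure_pmf.prob (traj E p tie n 1) {x. vol E n (Bset n (x 1)) = vol E n (V n)})
           \<longlonglongrightarrow> 1"
    and "(\<lambda>n. measure_pmf.prob (traj E p tie n 1) {x. tau E n x = 1}) \<longlonglongrightarrow> 1"
proof -
  define b where "b n = 2 * (real n powr 1 * exp (- (2 * (p - 1/2)\<^sup>2) * real (min_deg E n)))" for n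
  have b: "b \<longlonglongrightarrow> 0"
    unfolding b_def using p by (intro tendsto_mult_right_zero powr_mult_exp_tendsto_0 mindeg) simp
  define all_B where
    "all_B n = {x :: nat \<Rightarrow> nat \<Rightarrow> bool. \<not> B_majority E n (x 0) \<and> (\<forall>u \<in> V n. x 1 u)}" for n
  have prob_all_B: "1 - b n \<le> measure_pmf.prob (traj E p tie n 1) (all_B n)" for n
  proof -
    let ?M = "step E p tie n (\<lambda>_. False)"
    have "measure_pmf.prob ?M {c'. \<exists>u \<in> V n. c' u = (p < 1/2)} \<le> b n"
      using step_from_all_R_rare_state_prob_le[of n "\<lambda>_. False" p E tie] p by (simp add: b_def mult_ac)
    moreover have "measure_pmf.prob (traj E p tie n 1) (all_B n) = measure_pmf.prob ?M {c. \<forall>u \<in> V n. c u}"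
      unfolding traj_1 by (simp add: all_B_def not_B_majority_if_all_R vimage_def)
    moreover have "measure_pmf.prob ?M {c. \<forall>u \<in> V n. c u}
        = 1 - measure_pmf.prob ?M {c'. \<exists>u \<in> V n. c' u = (p < 1/2)}"
      using measure_pmf.prob_compl[of "{c'. \<exists>u \<in> V n. c' u = (p < 1/2)}" ?M] p
      by (simp add: set_diff_eq)
    ultimately show ?thesis
      by linarith
  qed
  show "(\<lambda>n. measure_pmf.prob (traj E p tie n 1) {x. vol E n (Bset n (x 1)) = vol E n (V n)})
           \<longlonglongrightarrow> 1"
    by (rule prob_tendsto_1_if_superset[OF b prob_all_B], intro always_eventually allI)
       (auto simp: all_B_def Bset_def intro!: arg_cong[where f = "vol E n" for n])
  have "\<forall>\<^sub>F n in sequentially. 1 * norm (ln (real n)) \<le> norm (real (min_deg E n))"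
    by (rule smallomegaD[OF mindeg])
  then have "\<forall>\<^sub>F n in sequentially. 0 < vol E n (V n)"
    using eventually_gt_at_top[of "1::nat"]
  proof eventually_elim
    case (elim n)
    have "0 < ln (real n)"
      using elim by simp
    also have "ln (real n) \<le> real (min_deg E n)"
      using elim by simp
    finally show ?case
      using elim by (simp add: vol_V_pos)
  qed
  then show "(\<lambda>n. measure_pmf.prob (traj E p tie n 1) {x. tau E n x = 1}) \<longlonglongrightarrow> 1"
    by (intro prob_tendsto_1_if_superset[OF b prob_all_B], elim eventually_mono)
       (unfold all_B_def, blast intro: tau_eq_1 B_majority_if_all_B)
qed

lemma slow_disruption:
  assumes mindeg: "(\<lambda>n. real (min_deg E n)) \<in> \<omega>(\<lambda>n. ln (real n))" and p: "0 \<le> p" "p < 1/2"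
  shows "(\<lambda>n. measure_pmf.prob (traj E p tie n (nat \<lfloor>real n powr K\<rfloor>))
            {x. \<forall>t::nat. real t \<le> real n powr K \<longrightarrow> vol E n (Rset n (x t)) = vol E n (V n)})
           \<longlonglongrightarrow> 1"
    and "(\<lambda>n. measure_pmf.prob (traj E p tie n (nat \<lfloor>real n powr K\<rfloor>))
            {x. case tau E n x of enat t \<Rightarrow> real t > real n powr K | \<infinity> \<Rightarrow> True})
           \<longlonglongrightarrow> 1"
proof -
  define b where "b n = 2 * (real n powr (K + 1) * exp (- (2 * (p - 1/2)\<^sup>2) * real (min_deg E n)))" for n
  have b: "b \<longlonglongrightarrow> 0"
    unfolding b_def using p by (intro tendsto_mult_right_zero powr_mult_exp_tendsto_0 mindeg) simp
  define all_R where "all_R n = {x :: nat \<Rightarrow> nat \<Rightarrow> bool. \<forall>t. \<forall>u \<in> V n. \<not> x t u}" for n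
  have prob_all_R: "1 - b n \<le> measure_pmf.prob (traj E p tie n (nat \<lfloor>real n powr K\<rfloor>)) (all_R n)" for n
  proof -
    let ?T = "nat \<lfloor>real n powr K\<rfloor>"
    let ?M = "traj E p tie n ?T"
    have "measure_pmf.prob ?M {x. \<exists>t. \<exists>u \<in> V n. x t u}
        \<le> real ?T * (2 * real n * exp (-2 * real (min_deg E n) * (p - 1/2)\<^sup>2))"
      using step_from_all_R_rare_state_prob_le[of n _ p E tie] p
      by (intro traj_leaves_all_R_prob_le) simp
    also have "\<dots> \<le> real n powr K * (2 * real n * exp (-2 * real (min_deg E n) * (p - 1/2)\<^sup>2))"
      by (intro mult_right_mono) simp_all
    also have "\<dots> = b n"
      by (simp add: b_def powr_add mult_ac)
    finally have "measure_pmf.prob ?M {x. \<exists>t. \<exists>u \<in> V n. x t u} \<le> b n" .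
    moreover have "measure_pmf.prob ?M (all_R n) = 1 - measure_pmf.prob ?M {x. \<exists>t. \<exists>u \<in> V n. x t u}"
      using measure_pmf.prob_compl[of "{x. \<exists>t. \<exists>u \<in> V n. x t u}" ?M]
      by (simp add: all_R_def set_diff_eq)
    ultimately show ?thesis
      by linarith
  qed
  show "(\<lambda>n. measure_pmf.prob (traj E p tie n (nat \<lfloor>real n powr K\<rfloor>))
            {x. \<forall>t::nat. real t \<le> real n powr K \<longrightarrow> vol E n (Rset n (x t)) = vol E n (V n)})
           \<longlonglongrightarrow> 1"
    by (rule prob_tendsto_1_if_superset[OF b prob_all_R], intro always_eventually allI)
       (auto simp: all_R_def Rset_def intro!: arg_cong[where f = "vol E n" for n])
  show "(\<lambda>n. measure_pmf.prob (traj E p tie n (nat \<lfloor>real n powr K\<rfloor>))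
            {x. case tau E n x of enat t \<Rightarrow> real t > real n powr K | \<infinity> \<Rightarrow> True})
           \<longlonglongrightarrow> 1"
    by (rule prob_tendsto_1_if_superset[OF b prob_all_R], intro always_eventually allI)
       (auto simp: all_R_def tau_def not_B_majority_if_all_R)
qed

theorem proposition6p2:
  fixes E :: "nat \<Rightarrow> nat \<Rightarrow> nat \<Rightarrow> bool"
    and p :: real
    and tie :: "nat \<Rightarrow> nat \<Rightarrow> (nat \<Rightarrow> bool) \<Rightarrow> bool pmf"
  assumes sym: "\<And>n u v. E n u v \<longleftrightarrow> E n v u"
    and irrefl: "\<And>n u. \<not> E n u u"
    and mindeg: "(\<lambda>n. real (min_deg E n)) \<in> \<omega>(\<lambda>n. ln (real n))"
    and p01: "0 \<le> p" "p \<le> 1"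
  shows
    "(p > 1/2 \<longrightarrow>
        (\<lambda>n. measure_pmf.prob (traj E p tie n 1)
                {x. vol E n (Bset n (x 1)) = vol E n (V n)}) \<longlonglongrightarrow> 1
      \<and> (\<lambda>n. measure_pmf.prob (traj E p tie n 1) {x. tau E n x = 1}) \<longlonglongrightarrow> 1)
   \<and> (p < 1/2 \<longrightarrow> (\<forall>K::real. K > 0 \<longrightarrow>
        (\<lambda>n. measure_pmf.prob (traj E p tie n (nat \<lfloor>real n powr K\<rfloor>))
                {x. \<forall>t::nat. real t \<le> real n powr K \<longrightarrow> vol E n (Rset n (x t)) = vol E n (V n)})
           \<longlonglongrightarrow> 1
      \<and> (\<lambda>n. measure_pmf.prob (traj E p tie n (nat \<lfloor>real n powr K\<rfloor>))
                {x. case tau E n x of enat t \<Rightarrow> real t > real n powr K | \<infinity> \<Rightarrow> True})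
           \<longlonglongrightarrow> 1))"
  \<comment> \<open>Only the degrees enter the bounds.\<close>
  using fast_disruption[OF mindeg _ p01(2)] slow_disruption[OF mindeg p01(1)] by blast

end
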